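(* Let $N\ge1$, $\beta>0$, $\mu>0$, and consider the Markovian SIR epidemic $\{(S_t,I_t)\}_{t\ge0}$ killed at $\hat\tau=\inf\{t>0: I_t\le1,\ S_t\le N-1\}$ (first return to level $i\le1$ after leaving $(N,1)$), with transient set $\hat S=\{(N,1)\}\cup\{(s,i)\in\mathbb{Z}^2:0\le s\le N,\ 2\le i\le N+1-s\}$. Then there exists a quasi-stationary distribution $\hat\nu$ on $\hat S$ for this killed process with $\hat\nu(N,1)>0$ (a non-trivial QSD) if and only if $\mu>\beta N$. In that case $\hat\nu$ is the unique QSD charging $(N,1)$, $\hat\nu(s,i)>0$ for every $(s,i)\in\hat S$, and $$\lim_{t\to\infty}P_{(N,1)}(S_t=s,\,I_t=i\mid\hat\tau>t)=\hat\nu(s,i),\quad (s,i)\in\hat S.$$ Moreover, for any probability distribution $\rho$ on $\hat S$ with $\rho(N,1)=0$, $\lim_{t\to\infty}P_\rho(S_t=s,\,I_t=i\mid\hat\tau>t)=\delta_{(0,2)}(s,i)$.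
   Context: SIR model: population of size $N+1$; $S_t$, $I_t$ are the numbers of susceptible and infected individuals. It is the continuous-time Markov chain on $\{(s,i)\in\mathbb{Z}^2:0\le s\le N,\ 0\le i\le N+1-s\}$ with transitions from $(S,I)$: $(S-1,I+1)$ at rate $\beta SI$ and $(S,I-1)$ at rate $\mu I$ (total rate $I(\beta S+\mu)$). A QSD for the killed process is a probability measure $\nu$ on $\hat S$ with $P_\nu((S_t,I_t)\in A\mid\hat\tau>t)=\nu(A)$ for all $t\ge0$, $A\subset\hat S$. *)

theory Defs
  imports Complex_Main
begin

definition SIR_hat :: "nat \<Rightarrow> (nat \<times> nat) set" where
  "SIR_hat N = {(N, 1)} \<union> {(s, i). s \<le> N \<and> 2 \<le> i \<and> i \<le> N + 1 - s}"

definition sir_rate :: "real \<Rightarrow> real \<Rightarrow> nat \<times> nat \<Rightarrow> nat \<times> nat \<Rightarrow> real" where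
  "sir_rate \<beta> \<mu> x y =
     (if 1 \<le> fst x \<and> y = (fst x - 1, snd x + 1) then \<beta> * real (fst x) * real (snd x)
      else if 1 \<le> snd x \<and> y = (fst x, snd x - 1) then \<mu> * real (snd x)
      else 0)"

definition sir_out :: "real \<Rightarrow> real \<Rightarrow> nat \<times> nat \<Rightarrow> real" where
  "sir_out \<beta> \<mu> x = real (snd x) * (\<beta> * real (fst x) + \<mu>)"

text \<open>Uniformization constant (strictly dominates all exit rates on the state space).\<close>
definition unif_rate :: "nat \<Rightarrow> real \<Rightarrow> real \<Rightarrow> real" where
  "unif_rate N \<beta> \<mu> = (\<beta> + \<mu>) * (real N + 1) ^ 2 + 1"

text \<open>Uniformized sub-stochastic kernel  I + Q/lambda  of the killed chain on SIR_hat N,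
  where Q is the sub-generator (rates restricted to SIR_hat N, diagonal = minus total exit rate).\<close>
definition unif_kernel :: "nat \<Rightarrow> real \<Rightarrow> real \<Rightarrow> nat \<times> nat \<Rightarrow> nat \<times> nat \<Rightarrow> real" where
  "unif_kernel N \<beta> \<mu> x y =
     (if x = y then 1 - sir_out \<beta> \<mu> x / unif_rate N \<beta> \<mu> else 0)
     + sir_rate \<beta> \<mu> x y / unif_rate N \<beta> \<mu>"

fun kpow :: "nat \<Rightarrow> real \<Rightarrow> real \<Rightarrow> nat \<Rightarrow> nat \<times> nat \<Rightarrow> nat \<times> nat \<Rightarrow> real" where
  "kpow N \<beta> \<mu> 0 x y = (if x = y then 1 else 0)"
| "kpow N \<beta> \<mu> (Suc n) x y = (\<Sum>z\<in>SIR_hat N. unif_kernel N \<beta> \<mu> x z * kpow N \<beta> \<mu> n z y)"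

text \<open>Transition function of the killed process:
  killed_trans t x y = P_x((S_t,I_t) = y, tau > t) = exp(t Q)(x,y), via uniformization.\<close>
definition killed_trans :: "nat \<Rightarrow> real \<Rightarrow> real \<Rightarrow> real \<Rightarrow> nat \<times> nat \<Rightarrow> nat \<times> nat \<Rightarrow> real" where
  "killed_trans N \<beta> \<mu> t x y =
     (\<Sum>n. exp (- unif_rate N \<beta> \<mu> * t) * (unif_rate N \<beta> \<mu> * t) ^ n / fact n * kpow N \<beta> \<mu> n x y)"

definition surv_prob :: "nat \<Rightarrow> real \<Rightarrow> real \<Rightarrow> (nat \<times> nat \<Rightarrow> real) \<Rightarrow> real \<Rightarrow> (nat \<times> nat) set \<Rightarrow> real" where
  "surv_prob N \<beta> \<mu> \<rho> t A =
     (\<Sum>x\<in>SIR_hat N. \<rho> x * (\<Sum>y\<in>A. killed_trans N \<beta> \<mu> t x y))"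

definition cond_prob :: "nat \<Rightarrow> real \<Rightarrow> real \<Rightarrow> (nat \<times> nat \<Rightarrow> real) \<Rightarrow> real \<Rightarrow> (nat \<times> nat) set \<Rightarrow> real" where
  "cond_prob N \<beta> \<mu> \<rho> t A = surv_prob N \<beta> \<mu> \<rho> t A / surv_prob N \<beta> \<mu> \<rho> t (SIR_hat N)"

definition prob_on :: "nat \<Rightarrow> (nat \<times> nat \<Rightarrow> real) \<Rightarrow> bool" where
  "prob_on N \<rho> \<longleftrightarrow> (\<forall>x. 0 \<le> \<rho> x) \<and> (\<forall>x. x \<notin> SIR_hat N \<longrightarrow> \<rho> x = 0)
                     \<and> sum \<rho> (SIR_hat N) = 1"

definition is_QSD :: "nat \<Rightarrow> real \<Rightarrow> real \<Rightarrow> (nat \<times> nat \<Rightarrow> real) \<Rightarrow> bool" where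
  "is_QSD N \<beta> \<mu> \<nu> \<longleftrightarrow> prob_on N \<nu> \<and>
     (\<forall>t\<ge>0. \<forall>A\<subseteq>SIR_hat N. cond_prob N \<beta> \<mu> \<nu> t A = sum \<nu> A)"

definition dirac_at :: "nat \<times> nat \<Rightarrow> nat \<times> nat \<Rightarrow> real" where
  "dirac_at a x = (if x = a then 1 else 0)"

end

theory Submission
  imports Defs
begin

text \<open>
  The killed chain is handled through its uniformization: its transition function is a Poisson
  mixture of the powers of the sub-stochastic kernel P = I + Q / L. For a QSD the invariance
  identity holds for every t \<ge> 0, and comparing the coefficients of t turns it into a left
  eigen-equation for P. Since (N, 1) cannot be re-entered, the eigenvalue is fixed by the exit
  rate \<beta> N + \<mu> of (N, 1), and the eigen-equation then determines the QSD state by state from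
  (N, 1) downwards. Every state receives a positive inflow, so the solution is positive exactly
  when all other exit rates exceed \<beta> N + \<mu>; the smallest of them is 2 \<mu>, at (0, 2).

  The limits come from Lyapunov weights M ^ level: when \<mu> > \<beta> N the mass away from (N, 1)
  decays faster than exp (- (\<beta> N + \<mu>) t), while for an initial law avoiding (N, 1) the mass
  at (0, 2) decays like exp (- 2 \<mu> t) and all other mass strictly faster.
\<close>

lemma powser_coeff_1_eq_0:
  fixes a :: "nat \<Rightarrow> real"
  assumes summable: "\<And>u. summable (\<lambda>n. a n * u ^ n)"
    and vanishes: "\<And>u. 0 < u \<Longrightarrow> (\<Sum>n. a n * u ^ n) = 0"
    and "a 0 = 0"
  shows "a 1 = 0"
proof -
  define g where "g u = (\<Sum>n. a (Suc n) * u ^ n)" for u :: real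
  have g_zero: "g u = 0" if u: "0 < u" for u
  proof -
    have "g u * u = (\<Sum>n. a n * u ^ n) - a 0"
      unfolding g_def by (rule powser_split_head(2)[OF summable])
    with vanishes[OF u] \<open>a 0 = 0\<close> u show ?thesis by simp
  qed
  have "\<forall>\<^sub>F u in at_right 0. g u = 0"
    using eventually_at_right_less[of "0::real"] by eventually_elim (rule g_zero)
  then have "(g \<longlongrightarrow> 0) (at_right 0)" by (rule tendsto_eventually)
  moreover have "(g \<longlongrightarrow> g 0) (at_right 0)"
  proof -
    have "summable (\<lambda>n. a (Suc n) * 1 ^ n)" by (rule powser_split_head(3)[OF summable])
    then have "isCont g 0" unfolding g_def by (rule isCont_powser) simp
    then show ?thesis unfolding isCont_def by (rule tendsto_mono[rotated]) (simp add: at_le)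
  qed
  ultimately have "g 0 = 0" using tendsto_unique[OF trivial_limit_at_right_real] by blast
  then show ?thesis unfolding g_def by simp
qed

lemma exp_series_coeff_1_eq_0:
  fixes d :: "nat \<Rightarrow> real"
  assumes bounded: "\<And>n. \<bar>d n\<bar> \<le> D"
    and vanishes: "\<And>u. 0 < u \<Longrightarrow> (\<Sum>n. d n / fact n * u ^ n) = 0"
    and "d 0 = 0"
  shows "d 1 = 0"
proof -
  have "summable (\<lambda>n. d n / fact n * u ^ n)" for u
  proof (rule summable_comparison_test)
    show "\<exists>N0. \<forall>n\<ge>N0. norm (d n / fact n * u ^ n) \<le> D * (\<bar>u\<bar> ^ n /\<^sub>R fact n)"
      using bounded by (intro exI allI impI)
        (simp add: abs_mult power_abs divide_right_mono mult_right_mono field_simps)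
    show "summable (\<lambda>n. D * (\<bar>u\<bar> ^ n /\<^sub>R fact n))"
      by (intro summable_mult sums_summable[OF exp_converges])
  qed
  then have "d 1 / fact 1 = 0"
    by (rule powser_coeff_1_eq_0) (use vanishes \<open>d 0 = 0\<close> in auto)
  then show ?thesis by simp
qed

lemma tendsto_mult_exp_neg_0:
  fixes c :: real
  assumes "0 < c"
  shows "((\<lambda>t. C * exp (- c * t)) \<longlongrightarrow> 0) at_top"
  by (intro tendsto_mult_right_zero filterlim_compose[OF exp_at_bot]
      filterlim_tendsto_neg_mult_at_bot[OF tendsto_const] filterlim_ident) (use assms in simp)

lemma tendsto_of_exp_decaying_error:
  fixes f :: "real \<Rightarrow> real"
  assumes "0 < c" and "\<forall>\<^sub>F t in at_top. \<bar>f t - l\<bar> \<le> C * exp (- c * t)"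
  shows "(f \<longlongrightarrow> l) at_top"
proof -
  note bound = tendsto_mult_exp_neg_0[OF assms(1), of C]
  have "((\<lambda>t. f t - l) \<longlongrightarrow> 0) at_top"
    by (rule tendsto_sandwich[OF _ _ tendsto_minus[OF bound, simplified] bound])
      (use assms(2) in \<open>auto elim!: eventually_mono\<close>)
  then show ?thesis by (rule LIM_zero_cancel)
qed

locale sir =
  fixes N :: nat and \<beta> \<mu> :: real
  assumes N_pos: "1 \<le> N" and \<beta>_pos: "0 < \<beta>" and \<mu>_pos: "0 < \<mu>"
begin

abbreviation "H \<equiv> SIR_hat N"
abbreviation "rate \<equiv> sir_rate \<beta> \<mu>"
abbreviation "out \<equiv> sir_out \<beta> \<mu>"
abbreviation "L \<equiv> unif_rate N \<beta> \<mu>"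
abbreviation "P \<equiv> unif_kernel N \<beta> \<mu>"
abbreviation "Pn \<equiv> kpow N \<beta> \<mu>"
abbreviation "K \<equiv> killed_trans N \<beta> \<mu>"

text \<open>Every jump lowers the level by one: it is the induction measure for the eigen-equation and
  the exponent of the Lyapunov weights.\<close>
definition level :: "nat \<times> nat \<Rightarrow> nat" where
  "level x = 2 * fst x + snd x"

lemma finite_H: "finite H"
proof (rule finite_subset)
  show "H \<subseteq> {0..N} \<times> {0..N+1}" unfolding SIR_hat_def by auto
qed simp

lemma mem_H:
  assumes "(s, i) \<in> H"
  shows "s \<le> N" "1 \<le> i" "i \<le> N + 1" "(s, i) \<noteq> (N, 1) \<Longrightarrow> 2 \<le> i \<and> s + i \<le> N + 1"
  using assms N_pos unfolding SIR_hat_def by auto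

lemma N1_in_H: "(N, 1) \<in> H"
  unfolding SIR_hat_def by simp

lemma zero_two_in_H: "(0, 2) \<in> H"
  unfolding SIR_hat_def using N_pos by simp

lemma N1_neq_zero_two: "(N, 1) \<noteq> (0, 2)"
  using N_pos by simp

lemma level_bounds: "x \<in> H \<Longrightarrow> 1 \<le> level x \<and> level x \<le> 2 * N + 1"
  unfolding level_def SIR_hat_def using N_pos by auto

lemma rate_nonneg: "0 \<le> rate x y"
  unfolding sir_rate_def using \<beta>_pos \<mu>_pos by auto

lemma rate_level: "rate x y \<noteq> 0 \<Longrightarrow> level x = Suc (level y)"
  unfolding sir_rate_def level_def by (auto split: if_splits)

lemma rate_to_N1: "x \<in> H \<Longrightarrow> rate x (N, 1) = 0"
  using mem_H unfolding sir_rate_def by (cases x) fastforce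

lemma rate_from_zero_two: "y \<in> H \<Longrightarrow> rate (0, 2) y = 0"
  using N_pos unfolding sir_rate_def SIR_hat_def by auto

lemma sum_rate_row:
  assumes "finite A"
  shows "(\<Sum>y\<in>A. rate (s, i) y * f y) =
     (if 1 \<le> s \<and> (s - 1, i + 1) \<in> A then \<beta> * real s * real i * f (s - 1, i + 1) else 0)
   + (if 1 \<le> i \<and> (s, i - 1) \<in> A then \<mu> * real i * f (s, i - 1) else 0)"
proof -
  have split: "rate (s, i) y =
     (if y = (s - 1, i + 1) then (if 1 \<le> s then \<beta> * real s * real i else 0) else 0)
   + (if y = (s, i - 1) then (if 1 \<le> i then \<mu> * real i else 0) else 0)" for y
    unfolding sir_rate_def by auto
  show ?thesis
    unfolding split distrib_right sum.distrib
    by (simp add: if_distrib[of "\<lambda>z. z * f _"] sum.delta[OF assms] cong: if_cong)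
qed

lemma sum_rate_col:
  assumes "finite A"
  shows "(\<Sum>x\<in>A. f x * rate x (s, i)) =
     (if 1 \<le> i \<and> (s + 1, i - 1) \<in> A then f (s + 1, i - 1) * (\<beta> * real (s + 1) * real (i - 1)) else 0)
   + (if (s, i + 1) \<in> A then f (s, i + 1) * (\<mu> * real (i + 1)) else 0)"
proof -
  have split: "rate x (s, i) =
     (if x = (s + 1, i - 1) then (if 1 \<le> i then \<beta> * real (s + 1) * real (i - 1) else 0) else 0)
   + (if x = (s, i + 1) then \<mu> * real (i + 1) else 0)" for x
    unfolding sir_rate_def by (cases x; cases "1 \<le> i") auto
  show ?thesis
    unfolding split distrib_left sum.distrib
    by (simp add: if_distrib[of "\<lambda>z. f _ * z"] sum.delta[OF assms] cong: if_cong)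
qed

lemma sum_rate_le_out: "(\<Sum>y\<in>H. rate x y) \<le> out x"
proof -
  obtain s i where x: "x = (s, i)" by fastforce
  show ?thesis
    using sum_rate_row[OF finite_H, of s i "\<lambda>_. 1"] \<beta>_pos \<mu>_pos
    unfolding x sir_out_def by (simp add: algebra_simps)
qed

definition outflow :: "(nat \<times> nat \<Rightarrow> real) \<Rightarrow> nat \<times> nat \<Rightarrow> real" where
  "outflow w x = (\<Sum>y\<in>H. rate x y * w y)"

definition inflow :: "(nat \<times> nat \<Rightarrow> real) \<Rightarrow> nat \<times> nat \<Rightarrow> real" where
  "inflow v y = (\<Sum>x\<in>H. v x * rate x y)"

lemma inflow_eq: "inflow v (s, i) =
     (if 1 \<le> i \<and> (s + 1, i - 1) \<in> H then v (s + 1, i - 1) * (\<beta> * real (s + 1) * real (i - 1)) else 0)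
   + (if (s, i + 1) \<in> H then v (s, i + 1) * (\<mu> * real (i + 1)) else 0)"
  unfolding inflow_def by (rule sum_rate_col[OF finite_H])

lemma inflow_cong:
  assumes "1 \<le> i \<Longrightarrow> (s + 1, i - 1) \<in> H \<Longrightarrow> f (s + 1, i - 1) = g (s + 1, i - 1)"
    and "(s, i + 1) \<in> H \<Longrightarrow> f (s, i + 1) = g (s, i + 1)"
  shows "inflow f (s, i) = inflow g (s, i)"
  unfolding inflow_eq using assms by auto

lemma inflow_scale: "inflow (\<lambda>x. c * v x) y = c * inflow v y"
  unfolding inflow_def by (simp add: sum_distrib_left mult.assoc)

lemma inflow_N1: "inflow v (N, 1) = 0"
  unfolding inflow_def by (intro sum.neutral ballI) (simp only: rate_to_N1 mult_zero_right)

lemma outflow_le: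
  assumes "0 \<le> c" and "\<And>y. y \<in> H \<Longrightarrow> rate x y \<noteq> 0 \<Longrightarrow> w y \<le> c"
  shows "outflow w x \<le> c * out x"
proof -
  have "outflow w x \<le> (\<Sum>y\<in>H. rate x y * c)"
    unfolding outflow_def
    by (intro sum_mono) (use assms rate_nonneg in \<open>fastforce intro: mult_left_mono\<close>)
  also have "\<dots> = c * (\<Sum>y\<in>H. rate x y)"
    by (simp add: sum_distrib_left mult.commute)
  also have "\<dots> \<le> c * out x"
    using sum_rate_le_out[of x] assms(1) by (rule mult_left_mono)
  finally show ?thesis .
qed

lemma outflow_zero_two: "outflow w (0, 2) = 0"
  unfolding outflow_def by (simp add: rate_from_zero_two)

lemma out_N1: "out (N, 1) = \<beta> * real N + \<mu>"
  unfolding sir_out_def by simp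

lemma out_zero_two: "out (0, 2) = 2 * \<mu>"
  unfolding sir_out_def by simp

lemma out_ge: "x \<in> H \<Longrightarrow> x \<noteq> (N, 1) \<Longrightarrow> 2 * \<mu> \<le> out x"
proof -
  assume x: "x \<in> H" "x \<noteq> (N, 1)"
  obtain s i where xs: "x = (s, i)" by fastforce
  have "2 \<le> i" using mem_H(4)[of s i] x xs by auto
  then have "2 * \<mu> \<le> real i * \<mu>" using \<mu>_pos by (intro mult_right_mono) auto
  also have "\<dots> \<le> real i * (\<beta> * real s + \<mu>)" using \<beta>_pos by (intro mult_left_mono) auto
  finally show ?thesis unfolding xs sir_out_def by simp
qed

lemma out_lt_L: "x \<in> H \<Longrightarrow> out x < L"
proof -
  assume x: "x \<in> H"
  obtain s i where xs: "x = (s, i)" by fastforce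
  have s: "real s \<le> real N" and i: "real i \<le> real N + 1" using mem_H[of s i] x xs by auto
  have "real i * (\<beta> * real s + \<mu>) \<le> (real N + 1) * (\<beta> * real N + \<mu>)"
    using s i \<beta>_pos \<mu>_pos by (intro mult_mono add_mono) auto
  also have "\<dots> \<le> (\<beta> + \<mu>) * (real N + 1) ^ 2"
    using \<beta>_pos \<mu>_pos by (simp add: power2_eq_square algebra_simps)
  finally show ?thesis unfolding xs sir_out_def unif_rate_def by simp
qed

lemma L_pos: "0 < L"
  unfolding unif_rate_def using \<beta>_pos \<mu>_pos by (simp add: add_pos_pos)

lemma three_\<mu>_le_L: "3 * \<mu> \<le> L"
proof -
  have "(2::real) ^ 2 \<le> (real N + 1) ^ 2" using N_pos by (intro power_mono) auto
  then have "(\<beta> + \<mu>) * 4 \<le> (\<beta> + \<mu>) * (real N + 1) ^ 2"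
    using \<beta>_pos \<mu>_pos by (intro mult_left_mono) auto
  then show ?thesis using \<beta>_pos \<mu>_pos unfolding unif_rate_def by simp
qed

lemma P_nonneg: "x \<in> H \<Longrightarrow> 0 \<le> P x y"
  using out_lt_L[of x] L_pos rate_nonneg[of x y] unfolding unif_kernel_def by auto

lemma P_row_sum: "x \<in> H \<Longrightarrow> (\<Sum>y\<in>H. P x y * w y) = (1 - out x / L) * w x + outflow w x / L"
  unfolding unif_kernel_def outflow_def distrib_right sum.distrib
  by (simp add: if_distrib[of "\<lambda>z. z * w _"] finite_H sum_divide_distrib[symmetric] cong: if_cong)

lemma P_col_sum: "y \<in> H \<Longrightarrow> (\<Sum>x\<in>H. v x * P x y) = v y * (1 - out y / L) + inflow v y / L"
  unfolding unif_kernel_def inflow_def distrib_left sum.distrib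
  by (simp add: if_distrib[of "\<lambda>z. v _ * z"] finite_H sum_divide_distrib[symmetric] cong: if_cong)

lemma P_to_N1:
  assumes "x \<in> H" and "x \<noteq> (N, 1)"
  shows "P x (N, 1) = 0"
  using assms rate_to_N1[OF assms(1)] unfolding unif_kernel_def by simp

lemma Pn_outside: "x \<in> H \<Longrightarrow> y \<notin> H \<Longrightarrow> Pn n x y = 0"
  by (induction n arbitrary: x) auto

lemma Pn_nonneg: "x \<in> H \<Longrightarrow> 0 \<le> Pn n x y"
  by (induction n arbitrary: x) (simp_all add: sum_nonneg P_nonneg)

lemma Pn_to_N1: "x \<in> H \<Longrightarrow> x \<noteq> (N, 1) \<Longrightarrow> Pn n x (N, 1) = 0"
proof (induction n arbitrary: x)
  case (Suc n)
  have "P x z * Pn n z (N, 1) = 0" if "z \<in> H" for z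
    using that Suc P_to_N1[OF Suc.prems] by (cases "z = (N, 1)") simp_all
  then show ?case by (simp add: sum.neutral)
qed simp

lemma Pn_one: "y \<in> H \<Longrightarrow> Pn 1 x y = P x y"
  using finite_H by (simp add: if_distrib[of "\<lambda>z. _ * z"] cong: if_cong)

lemma Pn_Suc_row:
  "(\<Sum>y\<in>H. Pn (Suc n) x y * w y) = (\<Sum>z\<in>H. P x z * (\<Sum>y\<in>H. Pn n z y * w y))"
proof -
  have "(\<Sum>y\<in>H. Pn (Suc n) x y * w y) = (\<Sum>y\<in>H. \<Sum>z\<in>H. P x z * Pn n z y * w y)"
    by (simp add: sum_distrib_right)
  also have "\<dots> = (\<Sum>z\<in>H. P x z * (\<Sum>y\<in>H. Pn n z y * w y))"
    by (subst sum.swap) (simp add: sum_distrib_left mult.assoc)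
  finally show ?thesis .
qed

lemma Pn_drift:
  assumes D: "D \<subseteq> H" and closed: "\<And>x z. x \<in> D \<Longrightarrow> z \<in> H \<Longrightarrow> z \<notin> D \<Longrightarrow> P x z = 0"
    and q: "0 \<le> q" and drift: "\<And>x. x \<in> D \<Longrightarrow> (\<Sum>z\<in>H. P x z * w z) \<le> q * w x"
    and x: "x \<in> D"
  shows "(\<Sum>y\<in>H. Pn n x y * w y) \<le> q ^ n * w x"
  using x
proof (induction n arbitrary: x)
  case 0
  then show ?case using D finite_H by (auto simp: if_distrib[of "\<lambda>z. z * w _"] cong: if_cong)
next
  case (Suc n)
  have "(\<Sum>y\<in>H. Pn (Suc n) x y * w y) = (\<Sum>z\<in>H. P x z * (\<Sum>y\<in>H. Pn n z y * w y))"
    by (rule Pn_Suc_row)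
  also have "\<dots> \<le> (\<Sum>z\<in>H. P x z * (q ^ n * w z))"
  proof (rule sum_mono)
    fix z assume z: "z \<in> H"
    show "P x z * (\<Sum>y\<in>H. Pn n z y * w y) \<le> P x z * (q ^ n * w z)"
      using Suc.IH[of z] P_nonneg[of x z] closed[OF Suc.prems z] Suc.prems D
      by (cases "z \<in> D") (auto intro: mult_left_mono)
  qed
  also have "\<dots> = q ^ n * (\<Sum>z\<in>H. P x z * w z)"
    by (simp add: sum_distrib_left algebra_simps)
  also have "\<dots> \<le> q ^ n * (q * w x)"
    using drift[OF Suc.prems] q by (simp add: mult_left_mono)
  finally show ?case by (simp add: ac_simps)
qed

lemma Pn_le_1:
  assumes "x \<in> H"
  shows "Pn n x y \<le> 1"
proof (cases "y \<in> H")
  case True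
  have "(\<Sum>z\<in>H. P x' z * 1) \<le> 1 * 1" if "x' \<in> H" for x'
  proof -
    have "outflow (\<lambda>_. 1) x' \<le> 1 * out x'" by (rule outflow_le) simp_all
    then have "outflow (\<lambda>_. 1) x' / L \<le> out x' / L" using L_pos by (simp add: divide_right_mono)
    then show ?thesis using P_row_sum[OF that, of "\<lambda>_. 1"] by simp
  qed
  then have "(\<Sum>z\<in>H. Pn n x z * 1) \<le> 1 ^ n * 1"
    by (intro Pn_drift[of H]) (use assms in auto)
  moreover have "Pn n x y \<le> (\<Sum>z\<in>H. Pn n x z)"
    by (rule member_le_sum) (use True Pn_nonneg assms finite_H in auto)
  ultimately show ?thesis by simp
qed (use Pn_outside assms in simp)

lemma abs_Pn_le_1: "x \<in> H \<Longrightarrow> \<bar>Pn n x y\<bar> \<le> 1"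
  using Pn_nonneg Pn_le_1 by simp

definition step_law :: "(nat \<times> nat \<Rightarrow> real) \<Rightarrow> nat \<Rightarrow> nat \<times> nat \<Rightarrow> real" where
  "step_law v n y = (\<Sum>x\<in>H. v x * Pn n x y)"

lemma step_law_0: "y \<in> H \<Longrightarrow> step_law v 0 y = v y"
  unfolding step_law_def using finite_H by (simp add: if_distrib[of "\<lambda>z. _ * z"] cong: if_cong)

lemma step_law_1: "y \<in> H \<Longrightarrow> step_law v 1 y = (\<Sum>x\<in>H. v x * P x y)"
  unfolding step_law_def by (simp only: Pn_one)

lemma step_law_Suc: "step_law v (Suc n) y = (\<Sum>z\<in>H. (\<Sum>x\<in>H. v x * P x z) * Pn n z y)"
proof -
  have "step_law v (Suc n) y = (\<Sum>x\<in>H. \<Sum>z\<in>H. v x * P x z * Pn n z y)"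
    unfolding step_law_def by (simp add: sum_distrib_left mult.assoc)
  also have "\<dots> = (\<Sum>z\<in>H. (\<Sum>x\<in>H. v x * P x z) * Pn n z y)"
    by (subst sum.swap) (simp add: sum_distrib_right)
  finally show ?thesis .
qed

lemma step_law_left_eigen:
  assumes eigen: "\<And>z. z \<in> H \<Longrightarrow> (\<Sum>x\<in>H. v x * P x z) = p * v z" and "y \<in> H"
  shows "step_law v n y = p ^ n * v y"
proof (induction n)
  case (Suc n)
  have "step_law v (Suc n) y = p * step_law v n y"
    unfolding step_law_Suc by (simp add: eigen step_law_def sum_distrib_left mult.assoc)
  then show ?case using Suc by simp
qed (use step_law_0 \<open>y \<in> H\<close> in simp)

lemma step_law_bounds:
  assumes "prob_on N v"
  shows "0 \<le> step_law v n y \<and> step_law v n y \<le> 1"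
proof
  have v: "\<And>x. 0 \<le> v x" "sum v H = 1" using assms unfolding prob_on_def by auto
  then show "0 \<le> step_law v n y"
    unfolding step_law_def by (intro sum_nonneg mult_nonneg_nonneg Pn_nonneg) auto
  have "step_law v n y \<le> (\<Sum>x\<in>H. v x)"
    unfolding step_law_def using Pn_le_1 v by (intro sum_mono) (simp add: mult_left_le)
  then show "step_law v n y \<le> 1" using v by simp
qed

definition poisson :: "real \<Rightarrow> nat \<Rightarrow> real" where
  "poisson t n = exp (- L * t) * (L * t) ^ n / fact n"

lemma poisson_nonneg: "0 \<le> t \<Longrightarrow> 0 \<le> poisson t n"
  unfolding poisson_def using L_pos by simp

lemma poisson_sums_exp: "(\<lambda>n. poisson t n * (1 - r / L) ^ n) sums exp (- r * t)"
proof -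
  have "(\<lambda>n. exp (- L * t) * ((L * t * (1 - r / L)) ^ n /\<^sub>R fact n))
      sums (exp (- L * t) * exp (L * t * (1 - r / L)))"
    by (rule sums_mult[OF exp_converges])
  moreover have "exp (- L * t) * exp (L * t * (1 - r / L)) = exp (- r * t)"
    using L_pos by (simp add: exp_add[symmetric] field_simps)
  ultimately show ?thesis
    by (simp add: poisson_def power_mult_distrib divide_inverse ac_simps)
qed

lemma summable_poisson:
  assumes t: "0 \<le> t" and bounded: "\<And>n. \<bar>c n\<bar> \<le> C"
  shows "summable (\<lambda>n. poisson t n * c n)"
proof (rule summable_comparison_test)
  show "\<exists>N0. \<forall>n\<ge>N0. norm (poisson t n * c n) \<le> C * (poisson t n * 1 ^ n)"
    using bounded poisson_nonneg[OF t]
    by (intro exI allI impI) (simp add: abs_mult mult_left_mono mult.commute[of C])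
  show "summable (\<lambda>n. C * (poisson t n * 1 ^ n))"
    using poisson_sums_exp[of t 0] by (intro summable_mult sums_summable) simp
qed

lemma K_eq_series: "K t x y = (\<Sum>n. poisson t n * Pn n x y)"
  unfolding killed_trans_def poisson_def ..

lemma summable_K_series: "0 \<le> t \<Longrightarrow> x \<in> H \<Longrightarrow> summable (\<lambda>n. poisson t n * Pn n x y)"
  by (rule summable_poisson[where C = 1]) (simp_all add: abs_Pn_le_1)

lemma K_nonneg: "0 \<le> t \<Longrightarrow> x \<in> H \<Longrightarrow> 0 \<le> K t x y"
  unfolding K_eq_series
  by (intro suminf_nonneg summable_K_series mult_nonneg_nonneg poisson_nonneg Pn_nonneg)

lemma K_outside: "x \<in> H \<Longrightarrow> y \<notin> H \<Longrightarrow> K t x y = 0"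
  unfolding K_eq_series by (simp add: Pn_outside)

lemma K_to_N1: "x \<in> H \<Longrightarrow> x \<noteq> (N, 1) \<Longrightarrow> K t x (N, 1) = 0"
  unfolding K_eq_series using Pn_to_N1[of x] by simp

lemma K_row_series:
  assumes t: "0 \<le> t" and x: "x \<in> H"
  shows "(\<Sum>y\<in>H. K t x y * w y) = (\<Sum>n. poisson t n * (\<Sum>y\<in>H. Pn n x y * w y))"
proof -
  have "(\<Sum>y\<in>H. K t x y * w y) = (\<Sum>y\<in>H. \<Sum>n. poisson t n * Pn n x y * w y)"
    unfolding K_eq_series by (intro sum.cong refl suminf_mult2 summable_K_series t x)
  also have "\<dots> = (\<Sum>n. \<Sum>y\<in>H. poisson t n * Pn n x y * w y)"
    by (rule suminf_sum[symmetric]) (intro summable_mult2 summable_K_series t x)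
  finally show ?thesis by (simp add: sum_distrib_left mult.assoc)
qed

lemma K_col_series:
  assumes t: "0 \<le> t"
  shows "(\<Sum>x\<in>H. v x * K t x y) = (\<Sum>n. poisson t n * step_law v n y)"
proof -
  have "(\<Sum>x\<in>H. v x * K t x y) = (\<Sum>x\<in>H. \<Sum>n. v x * (poisson t n * Pn n x y))"
    unfolding K_eq_series by (intro sum.cong refl suminf_mult[symmetric] summable_K_series t)
  also have "\<dots> = (\<Sum>n. \<Sum>x\<in>H. v x * (poisson t n * Pn n x y))"
    by (rule suminf_sum[symmetric]) (intro summable_mult summable_K_series t)
  finally show ?thesis by (simp add: step_law_def sum_distrib_left ac_simps)
qed

lemma K_drift:
  assumes D: "D \<subseteq> H" and closed: "\<And>x z. x \<in> D \<Longrightarrow> z \<in> H \<Longrightarrow> z \<notin> D \<Longrightarrow> P x z = 0"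
    and r: "r \<le> L" and drift: "\<And>x. x \<in> D \<Longrightarrow> (\<Sum>z\<in>H. P x z * w z) \<le> (1 - r / L) * w x"
    and t: "0 \<le> t" and x: "x \<in> D"
  shows "(\<Sum>y\<in>H. K t x y * w y) \<le> exp (- r * t) * w x"
proof -
  have xH: "x \<in> H" using x D by auto
  have q: "0 \<le> 1 - r / L" using r L_pos by simp
  have "(\<Sum>y\<in>H. K t x y * w y) = (\<Sum>n. poisson t n * (\<Sum>y\<in>H. Pn n x y * w y))"
    by (rule K_row_series[OF t xH])
  also have "\<dots> \<le> (\<Sum>n. poisson t n * (1 - r / L) ^ n * w x)"
  proof (rule suminf_le)
    show "summable (\<lambda>n. poisson t n * (\<Sum>y\<in>H. Pn n x y * w y))"
    proof (rule summable_poisson[OF t])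
      fix n
      have "\<bar>\<Sum>y\<in>H. Pn n x y * w y\<bar> \<le> (\<Sum>y\<in>H. \<bar>Pn n x y * w y\<bar>)" by (rule sum_abs)
      also have "\<dots> \<le> (\<Sum>y\<in>H. \<bar>w y\<bar>)"
        using abs_Pn_le_1[OF xH] by (intro sum_mono) (simp add: abs_mult mult_left_le_one_le)
      finally show "\<bar>\<Sum>y\<in>H. Pn n x y * w y\<bar> \<le> (\<Sum>y\<in>H. \<bar>w y\<bar>)" .
    qed
    show "summable (\<lambda>n. poisson t n * (1 - r / L) ^ n * w x)"
      by (intro summable_mult2 sums_summable[OF poisson_sums_exp])
    show "poisson t n * (\<Sum>y\<in>H. Pn n x y * w y) \<le> poisson t n * (1 - r / L) ^ n * w x" for n
      using Pn_drift[OF D closed q drift x, of n] poisson_nonneg[OF t, of n]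
      by (simp add: mult_left_mono mult.assoc)
  qed
  also have "\<dots> = exp (- r * t) * w x"
    by (rule sums_unique[symmetric], rule sums_mult2, rule poisson_sums_exp)
  finally show ?thesis .
qed

lemma K_drift_lower:
  assumes D: "D \<subseteq> H" and closed: "\<And>x z. x \<in> D \<Longrightarrow> z \<in> H \<Longrightarrow> z \<notin> D \<Longrightarrow> P x z = 0"
    and r: "r \<le> L" and drift: "\<And>x. x \<in> D \<Longrightarrow> (1 - r / L) * w x \<le> (\<Sum>z\<in>H. P x z * w z)"
    and t: "0 \<le> t" and x: "x \<in> D"
  shows "exp (- r * t) * w x \<le> (\<Sum>y\<in>H. K t x y * w y)"
  using K_drift[OF D closed r _ t x, of "\<lambda>z. - w z"] drift by (simp add: sum_negf)

lemma K_left_eigen: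
  assumes eigen: "\<And>z. z \<in> H \<Longrightarrow> (\<Sum>x\<in>H. v x * P x z) = (1 - r / L) * v z"
    and y: "y \<in> H" and t: "0 \<le> t"
  shows "(\<Sum>x\<in>H. v x * K t x y) = exp (- r * t) * v y"
proof -
  have "(\<Sum>x\<in>H. v x * K t x y) = (\<Sum>n. poisson t n * (1 - r / L) ^ n * v y)"
    by (simp add: K_col_series[OF t] step_law_left_eigen[OF eigen y] mult.assoc)
  also have "\<dots> = exp (- r * t) * v y"
    by (rule sums_unique[symmetric], rule sums_mult2, rule poisson_sums_exp)
  finally show ?thesis .
qed

lemma surv_prob_eq: "surv_prob N \<beta> \<mu> v t A = (\<Sum>y\<in>A. \<Sum>x\<in>H. v x * K t x y)"
  unfolding surv_prob_def by (simp add: sum_distrib_left sum.swap[of _ H A])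

lemma surv_prob_series:
  assumes v: "prob_on N v" and t: "0 \<le> t" and A: "A \<subseteq> H"
  shows "surv_prob N \<beta> \<mu> v t A = (\<Sum>n. poisson t n * (\<Sum>y\<in>A. step_law v n y))"
proof -
  have "summable (\<lambda>n. poisson t n * step_law v n y)" for y
    using step_law_bounds[OF v] by (intro summable_poisson[OF t, where C = 1]) auto
  then show ?thesis
    unfolding surv_prob_eq K_col_series[OF t]
    by (simp add: suminf_sum[symmetric] sum_distrib_left)
qed

text \<open>Both sides of the QSD identity P(X_t = y, survival) = \<nu>(y) P(survival) are Poisson
  mixtures over the steps of the uniformized chain.\<close>
lemma QSD_poisson_identity:
  assumes qsd: "is_QSD N \<beta> \<mu> v" and y: "y \<in> H" and t: "0 \<le> t"
  shows "(\<Sum>n. poisson t n * (step_law v n y - v y * (\<Sum>z\<in>H. step_law v n z))) = 0"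
proof -
  have v: "prob_on N v" and v_sum: "sum v H = 1"
    and invariant: "\<And>A. A \<subseteq> H \<Longrightarrow> cond_prob N \<beta> \<mu> v t A = sum v A"
    using qsd t unfolding is_QSD_def prob_on_def by auto
  have "surv_prob N \<beta> \<mu> v t H \<noteq> 0"
    using invariant[of H] v_sum unfolding cond_prob_def by auto
  moreover have "surv_prob N \<beta> \<mu> v t {y} / surv_prob N \<beta> \<mu> v t H = v y"
    using invariant[of "{y}"] y unfolding cond_prob_def by simp
  ultimately have "surv_prob N \<beta> \<mu> v t {y} = v y * surv_prob N \<beta> \<mu> v t H"
    by (simp add: divide_eq_eq)
  then have eq: "(\<Sum>n. poisson t n * step_law v n y)
      = v y * (\<Sum>n. poisson t n * (\<Sum>z\<in>H. step_law v n z))"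
    using surv_prob_series[OF v t, of "{y}"] surv_prob_series[OF v t order_refl] y by simp
  have summable: "summable (\<lambda>n. poisson t n * step_law v n z)" for z
    using step_law_bounds[OF v] by (intro summable_poisson[OF t, where C = 1]) auto
  then have summable_sum: "summable (\<lambda>n. poisson t n * (\<Sum>z\<in>H. step_law v n z))"
    by (simp add: sum_distrib_left summable_sum)
  have "(\<Sum>n. poisson t n * (step_law v n y - v y * (\<Sum>z\<in>H. step_law v n z)))
      = (\<Sum>n. poisson t n * step_law v n y - v y * (poisson t n * (\<Sum>z\<in>H. step_law v n z)))"
    by (simp add: algebra_simps)
  also have "\<dots> = (\<Sum>n. poisson t n * step_law v n y)
      - (\<Sum>n. v y * (poisson t n * (\<Sum>z\<in>H. step_law v n z)))"
    by (rule suminf_diff[OF summable summable_mult[OF summable_sum], symmetric])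
  also have "\<dots> = 0"
    using eq suminf_mult[OF summable_sum, of "v y"] by simp
  finally show ?thesis .
qed

text \<open>The Poisson identity holds for all t \<ge> 0; its coefficient of t recovers the
  one-step equation of the uniformized kernel.\<close>
lemma QSD_left_eigen:
  assumes qsd: "is_QSD N \<beta> \<mu> v" and y: "y \<in> H"
  shows "(\<Sum>x\<in>H. v x * P x y) = (\<Sum>z\<in>H. \<Sum>x\<in>H. v x * P x z) * v y"
proof -
  have v: "prob_on N v" and v_nonneg: "\<And>x. 0 \<le> v x" and v_sum: "sum v H = 1"
    using qsd unfolding is_QSD_def prob_on_def by auto
  define d where "d n = step_law v n y - v y * (\<Sum>z\<in>H. step_law v n z)" for n
  have d_bound: "\<bar>d n\<bar> \<le> 1 + v y * real (card H)" for n
  proof -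
    have "0 \<le> (\<Sum>z\<in>H. step_law v n z)" and "(\<Sum>z\<in>H. step_law v n z) \<le> real (card H)"
      using step_law_bounds[OF v] sum_mono[of H "step_law v n" "\<lambda>_. 1"] by (auto intro: sum_nonneg)
    then have "0 \<le> v y * (\<Sum>z\<in>H. step_law v n z)"
      and "v y * (\<Sum>z\<in>H. step_law v n z) \<le> v y * real (card H)"
      using v_nonneg[of y] by (simp_all add: mult_left_mono)
    then show ?thesis unfolding d_def using step_law_bounds[OF v, of n y] by linarith
  qed
  have "d 1 = 0"
  proof (rule exp_series_coeff_1_eq_0[OF d_bound])
    fix u :: real assume u: "0 < u"
    have "summable (\<lambda>n. poisson (u / L) n * d n)"
      using u L_pos by (intro summable_poisson[OF _ d_bound]) simp
    moreover have "d n / fact n * u ^ n = exp u * (poisson (u / L) n * d n)" for n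
      using L_pos by (simp add: poisson_def exp_minus field_simps)
    ultimately show "(\<Sum>n. d n / fact n * u ^ n) = 0"
      using QSD_poisson_identity[OF qsd y, of "u / L"] u L_pos unfolding d_def
      by (simp add: suminf_mult)
  next
    show "d 0 = 0" using v_sum y unfolding d_def by (simp add: step_law_0)
  qed
  moreover have "(\<Sum>z\<in>H. step_law v 1 z) = (\<Sum>z\<in>H. \<Sum>x\<in>H. v x * P x z)"
    by (rule sum.cong[OF refl step_law_1])
  ultimately show ?thesis
    using step_law_1[OF y] unfolding d_def by (simp add: mult.commute)
qed

lemma left_eigen_iff_inflow:
  assumes "y \<in> H"
  shows "(\<Sum>x\<in>H. v x * P x y) = (1 - out (N, 1) / L) * v y
     \<longleftrightarrow> inflow v y = (out y - out (N, 1)) * v y"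
proof -
  have "a - (1 - c / L) * w = (i - (c' - c) * w) / L" if "a = w * (1 - c' / L) + i / L"
    for a w c c' i :: real
    using that L_pos by (simp add: field_simps)
  note diff = this[OF P_col_sum[OF assms]]
  have "(\<Sum>x\<in>H. v x * P x y) = (1 - out (N, 1) / L) * v y
      \<longleftrightarrow> (\<Sum>x\<in>H. v x * P x y) - (1 - out (N, 1) / L) * v y = 0"
    by (rule eq_iff_diff_eq_0)
  also have "\<dots> \<longleftrightarrow> inflow v y - (out y - out (N, 1)) * v y = 0"
    unfolding diff using L_pos by simp
  also have "\<dots> \<longleftrightarrow> inflow v y = (out y - out (N, 1)) * v y"
    by (rule eq_iff_diff_eq_0[symmetric])
  finally show ?thesis .
qed

lemma QSD_inflow:
  assumes qsd: "is_QSD N \<beta> \<mu> v" and charged: "0 < v (N, 1)" and y: "y \<in> H"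
  shows "inflow v y = (out y - out (N, 1)) * v y"
proof -
  define p where "p = (\<Sum>z\<in>H. \<Sum>x\<in>H. v x * P x z)"
  have "p * v (N, 1) = v (N, 1) * (1 - out (N, 1) / L)"
    using QSD_left_eigen[OF qsd N1_in_H] P_col_sum[OF N1_in_H, of v] inflow_N1[of v]
    unfolding p_def by simp
  then have "p = 1 - out (N, 1) / L" using charged by simp
  then show ?thesis
    using QSD_left_eigen[OF qsd y] left_eigen_iff_inflow[OF y] unfolding p_def by simp
qed

lemma eigen_is_QSD:
  assumes v: "prob_on N v" and eigen: "\<And>z. z \<in> H \<Longrightarrow> (\<Sum>x\<in>H. v x * P x z) = (1 - r / L) * v z"
  shows "is_QSD N \<beta> \<mu> v"
  unfolding is_QSD_def
proof (intro conjI allI impI v)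
  fix t :: real and A assume t: "0 \<le> t" and A: "A \<subseteq> H"
  have surv: "surv_prob N \<beta> \<mu> v t B = exp (- r * t) * sum v B" if "B \<subseteq> H" for B
    unfolding surv_prob_eq using that
    by (simp add: K_left_eigen[OF eigen _ t] subset_eq sum_distrib_left)
  show "cond_prob N \<beta> \<mu> v t A = sum v A"
    using v A unfolding cond_prob_def prob_on_def surv[OF A] surv[OF order_refl] by simp
qed

lemma predecessor_induct[case_names step]:
  assumes step: "\<And>s i. (1 \<le> i \<Longrightarrow> (s + 1, i - 1) \<in> H \<Longrightarrow> Q (s + 1, i - 1))
    \<Longrightarrow> ((s, i + 1) \<in> H \<Longrightarrow> Q (s, i + 1)) \<Longrightarrow> Q (s, i)"
  shows "Q x"
proof (induction x rule: measure_induct_rule[of "\<lambda>x. 2 * N + 2 - level x"])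
  case (less x)
  obtain s i where x: "x = (s, i)" by fastforce
  show ?case unfolding x
  proof (rule step)
    assume "1 \<le> i" "(s + 1, i - 1) \<in> H"
    then show "Q (s + 1, i - 1)"
      using less[of "(s + 1, i - 1)"] level_bounds[of "(s + 1, i - 1)"] by (simp add: x level_def)
  next
    assume "(s, i + 1) \<in> H"
    then show "Q (s, i + 1)"
      using less[of "(s, i + 1)"] level_bounds[of "(s, i + 1)"] by (simp add: x level_def)
  qed
qed

lemma inflow_pos:
  assumes y: "(s, i) \<in> H" "(s, i) \<noteq> (N, 1)"
    and pos1: "1 \<le> i \<Longrightarrow> (s + 1, i - 1) \<in> H \<Longrightarrow> 0 < v (s + 1, i - 1)"
    and pos2: "(s, i + 1) \<in> H \<Longrightarrow> 0 < v (s, i + 1)"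
  shows "0 < inflow v (s, i)"
proof -
  have i: "2 \<le> i" and si: "s + i \<le> N + 1" using mem_H[OF y(1)] y(2) by auto
  consider "(s, i + 1) \<in> H" | "(s + 1, i - 1) \<in> H"
    using i si mem_H(1)[OF y(1)] unfolding SIR_hat_def by force
  then show ?thesis
    using i pos1 pos2 \<beta>_pos \<mu>_pos unfolding inflow_eq
    by cases (auto intro!: add_pos_nonneg add_nonneg_pos)
qed

text \<open>Solving the eigen-equation of a QSD state by state, from the higher levels down, with the
  normalisation 1 at (N, 1).\<close>
function qsd_profile :: "nat \<times> nat \<Rightarrow> real" where
  "qsd_profile (s, i) = (if (s, i) = (N, 1) then 1 else if (s, i) \<notin> H then 0 else
     ((if 1 \<le> i \<and> (s + 1, i - 1) \<in> H
       then qsd_profile (s + 1, i - 1) * (\<beta> * real (s + 1) * real (i - 1)) else 0)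
    + (if (s, i + 1) \<in> H then qsd_profile (s, i + 1) * (\<mu> * real (i + 1)) else 0))
     / (out (s, i) - out (N, 1)))"
  by pat_completeness auto
termination
  by (relation "measure (\<lambda>x. 2 * N + 2 - level x)")
    (use level_bounds in \<open>fastforce simp: level_def\<close>)+

declare qsd_profile.simps[simp del]

lemma qsd_profile_N1: "qsd_profile (N, 1) = 1"
  by (simp add: qsd_profile.simps)

lemma qsd_profile_outside: "y \<notin> H \<Longrightarrow> qsd_profile y = 0"
  using N1_in_H by (cases y) (auto simp: qsd_profile.simps)

lemma qsd_profile_eq:
  "y \<in> H \<Longrightarrow> y \<noteq> (N, 1) \<Longrightarrow> qsd_profile y = inflow qsd_profile y / (out y - out (N, 1))"
  by (cases y) (simp add: qsd_profile.simps inflow_eq)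

lemma out_N1_lt:
  assumes "\<beta> * real N < \<mu>" and "y \<in> H" and "y \<noteq> (N, 1)"
  shows "out (N, 1) < out y"
  using out_ge[OF assms(2,3)] assms(1) unfolding out_N1 by simp

lemma qsd_profile_pos:
  assumes subcritical: "\<beta> * real N < \<mu>"
  shows "(y \<in> H \<longrightarrow> 0 < qsd_profile y) \<and> 0 \<le> qsd_profile y"
proof (induction y rule: predecessor_induct)
  case (step s i)
  show ?case
  proof (cases "(s, i) = (N, 1) \<or> (s, i) \<notin> H")
    case True
    then show ?thesis using qsd_profile_N1 qsd_profile_outside by auto
  next
    case False
    then have y: "(s, i) \<in> H" "(s, i) \<noteq> (N, 1)" by auto
    have "0 < inflow qsd_profile (s, i)" by (rule inflow_pos[OF y]) (use step in auto)
    then show ?thesis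
      using qsd_profile_eq[OF y] out_N1_lt[OF subcritical y] by simp
  qed
qed

text \<open>The eigen-equation at (0, 2) reads inflow = (2 \<mu> - \<beta> N - \<mu>) v (0, 2), and the inflow into
  every state is positive.\<close>
lemma QSD_charging_N1_imp_subcritical:
  assumes qsd: "is_QSD N \<beta> \<mu> v" and charged: "0 < v (N, 1)"
  shows "\<beta> * real N < \<mu>"
proof -
  have v_nonneg: "0 \<le> v y" for y using qsd unfolding is_QSD_def prob_on_def by (cases y) simp
  have "y \<in> H \<longrightarrow> 0 < v y \<and> (y \<noteq> (N, 1) \<longrightarrow> out (N, 1) < out y)" for y
  proof (induction y rule: predecessor_induct)
    case (step s i)
    show ?case
    proof (cases "(s, i) = (N, 1) \<or> (s, i) \<notin> H")
      case True
      then show ?thesis using charged by auto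
    next
      case False
      then have y: "(s, i) \<in> H" "(s, i) \<noteq> (N, 1)" by auto
      have "0 < inflow v (s, i)" by (rule inflow_pos[OF y]) (use step in auto)
      then have "0 < (out (s, i) - out (N, 1)) * v (s, i)"
        using QSD_inflow[OF qsd charged y(1)] by simp
      then show ?thesis using v_nonneg[of "(s, i)"] y by (auto simp: zero_less_mult_iff)
    qed
  qed
  then have "out (N, 1) < out (0, 2)" using zero_two_in_H N1_neq_zero_two by auto
  then show ?thesis unfolding out_N1 out_zero_two by simp
qed

lemma QSD_eq_profile:
  assumes qsd: "is_QSD N \<beta> \<mu> v" and charged: "0 < v (N, 1)"
  shows "v y = v (N, 1) * qsd_profile y"
proof (induction y rule: predecessor_induct)
  case (step s i)
  show ?case
  proof (cases "(s, i) = (N, 1) \<or> (s, i) \<notin> H")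
    case True
    then show ?thesis
      using qsd qsd_profile_N1 qsd_profile_outside unfolding is_QSD_def prob_on_def by auto
  next
    case False
    then have y: "(s, i) \<in> H" "(s, i) \<noteq> (N, 1)" by auto
    have gap: "out (s, i) - out (N, 1) \<noteq> 0"
      using out_N1_lt[OF QSD_charging_N1_imp_subcritical[OF qsd charged] y] by simp
    have "(out (s, i) - out (N, 1)) * v (s, i) = inflow v (s, i)"
      using QSD_inflow[OF qsd charged y(1)] by simp
    also have "\<dots> = inflow (\<lambda>z. v (N, 1) * qsd_profile z) (s, i)"
      by (rule inflow_cong) (use step in auto)
    also have "\<dots> = v (N, 1) * ((out (s, i) - out (N, 1)) * qsd_profile (s, i))"
      using qsd_profile_eq[OF y] gap by (simp add: inflow_scale)
    finally show ?thesis using gap by simp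
  qed
qed

definition qsd :: "nat \<times> nat \<Rightarrow> real" where
  "qsd y = qsd_profile y / (\<Sum>z\<in>H. qsd_profile z)"

context
  assumes subcritical: "\<beta> * real N < \<mu>"
begin

lemma sum_qsd_profile_pos: "0 < (\<Sum>z\<in>H. qsd_profile z)"
  using qsd_profile_pos[OF subcritical] N1_in_H finite_H by (intro sum_pos2) auto

lemma qsd_prob: "prob_on N qsd"
  unfolding prob_on_def qsd_def
  using sum_qsd_profile_pos qsd_profile_pos[OF subcritical] qsd_profile_outside
  by (auto simp: sum_divide_distrib[symmetric])

lemma qsd_pos: "y \<in> H \<Longrightarrow> 0 < qsd y"
  unfolding qsd_def using sum_qsd_profile_pos qsd_profile_pos[OF subcritical] by simp

lemma qsd_left_eigen: "y \<in> H \<Longrightarrow> (\<Sum>x\<in>H. qsd x * P x y) = (1 - out (N, 1) / L) * qsd y"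
proof (cases "y = (N, 1)")
  case False
  assume y: "y \<in> H"
  have "inflow qsd y = inflow qsd_profile y / (\<Sum>z\<in>H. qsd_profile z)"
    unfolding qsd_def inflow_def by (simp add: sum_divide_distrib)
  also have "inflow qsd_profile y = (out y - out (N, 1)) * qsd_profile y"
    using qsd_profile_eq[OF y False] out_N1_lt[OF subcritical y False] by simp
  finally have "inflow qsd y = (out y - out (N, 1)) * qsd y" by (simp add: qsd_def[abs_def])
  then show ?thesis using left_eigen_iff_inflow[OF y] by simp
qed (use left_eigen_iff_inflow[OF N1_in_H, of qsd] inflow_N1[of qsd] in simp)

lemma qsd_is_QSD: "is_QSD N \<beta> \<mu> qsd"
  by (rule eigen_is_QSD[OF qsd_prob qsd_left_eigen])

lemma QSD_charging_N1_unique: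
  assumes qsd': "is_QSD N \<beta> \<mu> v" and charged: "0 < v (N, 1)"
  shows "v = qsd"
proof
  fix y
  have "1 = (\<Sum>z\<in>H. v z)" using qsd' unfolding is_QSD_def prob_on_def by simp
  also have "\<dots> = (\<Sum>z\<in>H. v (N, 1) * qsd_profile z)"
    by (rule sum.cong[OF refl QSD_eq_profile[OF qsd' charged]])
  also have "\<dots> = v (N, 1) * (\<Sum>z\<in>H. qsd_profile z)"
    by (simp add: sum_distrib_left)
  finally have "v (N, 1) = 1 / (\<Sum>z\<in>H. qsd_profile z)"
    using sum_qsd_profile_pos by (simp add: eq_divide_eq)
  then show "v y = qsd y"
    using QSD_eq_profile[OF qsd' charged, of y] unfolding qsd_def by simp
qed

end

lemma level_weight_drift:
  assumes x: "x \<in> H" and M: "1 \<le> M" and w: "\<And>y. 0 \<le> w y \<and> w y \<le> M ^ level y"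
    and wx: "w x = M ^ level x" and r: "r * M \<le> (M - 1) * out x"
  shows "(\<Sum>z\<in>H. P x z * w z) \<le> (1 - r / L) * w x"
proof -
  obtain l where l: "level x = Suc l" using level_bounds[OF x] by (cases "level x") auto
  define k where "k = M ^ l"
  have k: "0 \<le> k" unfolding k_def using M by simp
  have wx_k: "w x = M * k" unfolding wx k_def l by simp
  have "outflow w x \<le> k * out x"
  proof (rule outflow_le[OF k])
    fix y assume "rate x y \<noteq> 0"
    then have "level y = l" using rate_level l by simp
    then show "w y \<le> k" using w[of y] unfolding k_def by simp
  qed
  then have "(\<Sum>z\<in>H. P x z * w z) \<le> (1 - out x / L) * (M * k) + k * out x / L"
    using P_row_sum[OF x, of w] L_pos wx_k by (simp add: divide_right_mono)
  also have "\<dots> = M * k - (M - 1) * out x * k / L"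
    using L_pos by (simp add: field_simps)
  also have "\<dots> \<le> M * k - r * M * k / L"
    using mult_right_mono[OF r k] L_pos by (simp add: divide_right_mono)
  also have "\<dots> = (1 - r / L) * w x"
    unfolding wx_k using L_pos by (simp add: field_simps)
  finally show ?thesis .
qed

lemma K_decay:
  assumes M: "1 \<le> M" and r: "r \<le> L" and w: "\<And>y. 0 \<le> w y \<and> w y \<le> M ^ level y"
    and drift: "\<And>x. x \<in> H \<Longrightarrow> x \<noteq> (N, 1) \<Longrightarrow> (\<Sum>z\<in>H. P x z * w z) \<le> (1 - r / L) * w x"
    and t: "0 \<le> t" and x: "x \<in> H" "x \<noteq> (N, 1)" and y: "y \<in> H" "1 \<le> w y"
  shows "K t x y \<le> M ^ (2 * N + 1) * exp (- r * t)"
proof -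
  have "K t x y \<le> K t x y * w y"
    using K_nonneg[OF t x(1)] y(2) mult_left_mono[of 1 "w y"] by simp
  also have "\<dots> \<le> (\<Sum>z\<in>H. K t x z * w z)"
    by (rule member_le_sum) (use y w K_nonneg[OF t x(1)] finite_H in auto)
  also have "\<dots> \<le> exp (- r * t) * w x"
    by (rule K_drift[of "H - {(N, 1)}"]) (use P_to_N1 r drift t x in auto)
  also have "\<dots> \<le> exp (- r * t) * M ^ (2 * N + 1)"
    using w[of x] power_increasing[OF conjunct2[OF level_bounds[OF x(1)]] M]
    by (intro mult_left_mono) auto
  finally show ?thesis by (simp add: mult.commute)
qed

lemma K_decay_off_N1:
  assumes subcritical: "\<beta> * real N < \<mu>"
  obtains r C where "out (N, 1) < r" and "0 \<le> C"
    and "\<And>t x y. 0 \<le> t \<Longrightarrow> x \<in> H \<Longrightarrow> x \<noteq> (N, 1) \<Longrightarrow> K t x y \<le> C * exp (- r * t)"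
proof -
  define r where "r = (out (N, 1) + 2 * \<mu>) / 2"
  define M where "M = 4 * \<mu> / (2 * \<mu> - out (N, 1))"
  have gap: "out (N, 1) < 2 * \<mu>" using subcritical unfolding out_N1 by simp
  have M: "1 \<le> M" and rM: "r * M = (M - 1) * (2 * \<mu>)"
    using gap out_N1 \<beta>_pos \<mu>_pos unfolding M_def r_def by (simp_all add: field_simps)
  have r: "r \<le> L" using gap three_\<mu>_le_L \<mu>_pos unfolding r_def by simp
  have drift: "(\<Sum>z\<in>H. P x z * M ^ level z) \<le> (1 - r / L) * M ^ level x"
    if "x \<in> H" "x \<noteq> (N, 1)" for x
  proof (rule level_weight_drift[OF that(1) M])
    show "r * M \<le> (M - 1) * out x"
      unfolding rM using out_ge[OF that] M by (intro mult_left_mono) auto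
  qed (use M in simp_all)
  show thesis
  proof (rule that[of r "M ^ (2 * N + 1)"])
    fix t :: real and x y assume t: "0 \<le> t" and x: "x \<in> H" "x \<noteq> (N, 1)"
    show "K t x y \<le> M ^ (2 * N + 1) * exp (- r * t)"
    proof (cases "y \<in> H")
      case True
      then show ?thesis
        by (intro K_decay[where w = "\<lambda>z. M ^ level z", OF M r _ drift t x]) (use M in simp_all)
    qed (use K_outside[OF x(1)] M in simp)
  qed (use gap M in \<open>simp_all add: r_def\<close>)
qed

lemma out_ge_off_zero_two:
  assumes "x \<in> H" and "x \<noteq> (N, 1)" and "x \<noteq> (0, 2)"
  shows "2 * \<mu> + min \<mu> (2 * \<beta>) \<le> out x"
proof -
  obtain s i where x: "x = (s, i)" by fastforce
  have i: "2 \<le> i" using mem_H(4)[of s i] assms x by auto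
  show ?thesis
  proof (cases "i = 2")
    case True
    then have "1 \<le> s" using assms(3) x by (cases s) auto
    then have "2 * (\<beta> + \<mu>) \<le> 2 * (\<beta> * real s + \<mu>)" using \<beta>_pos by simp
    then show ?thesis using True unfolding x sir_out_def by simp
  next
    case False
    then have "3 * \<mu> \<le> real i * \<mu>" using i \<mu>_pos by (intro mult_right_mono) auto
    also have "\<dots> \<le> real i * (\<beta> * real s + \<mu>)" using \<beta>_pos by (intro mult_left_mono) auto
    finally show ?thesis unfolding x sir_out_def by simp
  qed
qed

text \<open>Off (N, 1) the slowest exit rate, 2 \<mu>, is attained only at (0, 2), which the chain can
  never leave for another state of H; so the mass elsewhere decays strictly faster.\<close>
lemma K_decay_off_zero_two:
  obtains r C where "2 * \<mu> < r" and "0 \<le> C"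
    and "\<And>t x y. 0 \<le> t \<Longrightarrow> x \<in> H \<Longrightarrow> x \<noteq> (N, 1) \<Longrightarrow> y \<in> H \<Longrightarrow> y \<noteq> (N, 1) \<Longrightarrow> y \<noteq> (0, 2)
      \<Longrightarrow> K t x y \<le> C * exp (- r * t)"
proof -
  define \<delta> where "\<delta> = min \<mu> (2 * \<beta>)"
  define r where "r = 2 * \<mu> + \<delta> / 2"
  define M where "M = 2 * (2 * \<mu> + \<delta>) / \<delta>"
  define w where "w y = (if y \<in> H \<and> y \<noteq> (N, 1) \<and> y \<noteq> (0, 2) then M ^ level y else 0)" for y
  have \<delta>: "0 < \<delta>" "\<delta> \<le> \<mu>" unfolding \<delta>_def using \<beta>_pos \<mu>_pos by auto
  have M: "1 \<le> M" and rM: "r * M = (M - 1) * (2 * \<mu> + \<delta>)"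
    using \<delta> \<mu>_pos unfolding M_def r_def by (simp_all add: field_simps)
  have r: "r \<le> L" using \<delta> three_\<mu>_le_L unfolding r_def by simp
  have w: "0 \<le> w y \<and> w y \<le> M ^ level y" for y unfolding w_def using M by simp
  have drift: "(\<Sum>z\<in>H. P x z * w z) \<le> (1 - r / L) * w x" if x: "x \<in> H" "x \<noteq> (N, 1)" for x
  proof (cases "x = (0, 2)")
    case True
    then show ?thesis using P_row_sum[OF x(1), of w] outflow_zero_two by (simp add: w_def)
  next
    case False
    show ?thesis
    proof (rule level_weight_drift[OF x(1) M w])
      show "w x = M ^ level x" using x False unfolding w_def by simp
      show "r * M \<le> (M - 1) * out x"
        unfolding rM using out_ge_off_zero_two[OF x False] M unfolding \<delta>_def
        by (intro mult_left_mono) auto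
    qed
  qed
  show thesis
  proof (rule that[of r "M ^ (2 * N + 1)"])
    fix t :: real and x y assume "0 \<le> t" "x \<in> H" "x \<noteq> (N, 1)" "y \<in> H" "y \<noteq> (N, 1)" "y \<noteq> (0, 2)"
    then show "K t x y \<le> M ^ (2 * N + 1) * exp (- r * t)"
      using M by (intro K_decay[OF M r w drift]) (auto simp: w_def)
  qed (use \<delta> M in \<open>simp_all add: r_def\<close>)
qed

lemma exists_fast_neighbour:
  assumes "x \<in> H" and "x \<noteq> (N, 1)" and "x \<noteq> (0, 2)"
  obtains y where "y \<in> H" and "min \<beta> \<mu> \<le> rate x y" and "level x = Suc (level y)"
proof -
  obtain s i where x: "x = (s, i)" by fastforce
  have i: "2 \<le> i" and si: "s + i \<le> N + 1" using mem_H(4)[of s i] assms x by auto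
  show thesis
  proof (cases "i = 2")
    case True
    then have s: "1 \<le> s" using assms(3) x by (cases s) auto
    show thesis
    proof (rule that[of "(s - 1, i + 1)"])
      show "(s - 1, i + 1) \<in> H" using s si True unfolding SIR_hat_def by auto
      have "\<beta> \<le> \<beta> * (real s * real i)" using s True \<beta>_pos by simp
      then show "min \<beta> \<mu> \<le> rate x (s - 1, i + 1)"
        using s unfolding x sir_rate_def by (simp add: mult.assoc)
      show "level x = Suc (level (s - 1, i + 1))" using s unfolding x level_def by simp
    qed
  next
    case False
    show thesis
    proof (rule that[of "(s, i - 1)"])
      show "(s, i - 1) \<in> H" using i si False mem_H(1)[of s i] assms(1) x unfolding SIR_hat_def by auto
      have "\<mu> \<le> \<mu> * real i" using i \<mu>_pos by simp
      then show "min \<beta> \<mu> \<le> rate x (s, i - 1)"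
        using i unfolding x sir_rate_def by auto
      show "level x = Suc (level (s, i - 1))" using i unfolding x level_def by simp
    qed
  qed
qed

lemma level_weight_drift_lower:
  assumes x: "x \<in> H" "x \<noteq> (N, 1)" and e: "e = min \<beta> \<mu> / L"
  shows "(1 - 2 * \<mu> / L) * e ^ level x \<le> (\<Sum>z\<in>H. P x z * e ^ level z)"
proof (cases "x = (0, 2)")
  case True
  then show ?thesis using P_row_sum[OF x(1)] outflow_zero_two out_zero_two by simp
next
  case False
  have e_pos: "0 < e" unfolding e using \<beta>_pos \<mu>_pos L_pos by simp
  obtain y where y: "y \<in> H" "min \<beta> \<mu> \<le> rate x y" "level x = Suc (level y)"
    using exists_fast_neighbour[OF x False] .
  have "L * e ^ level x = min \<beta> \<mu> * e ^ level y"
    unfolding y(3) e using L_pos by simp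
  also have "\<dots> \<le> rate x y * e ^ level y"
    using y(2) e_pos by (simp add: mult_right_mono)
  also have "\<dots> \<le> outflow (\<lambda>z. e ^ level z) x"
    unfolding outflow_def
    by (rule member_le_sum) (use y(1) finite_H rate_nonneg e_pos in auto)
  finally have "e ^ level x \<le> outflow (\<lambda>z. e ^ level z) x / L"
    using L_pos by (simp add: field_simps)
  moreover have "0 \<le> (1 - out x / L) * e ^ level x"
    using out_lt_L[OF x(1)] L_pos e_pos by simp
  moreover have "(1 - 2 * \<mu> / L) * e ^ level x \<le> e ^ level x"
    using \<mu>_pos L_pos e_pos by (simp add: field_simps)
  ultimately show ?thesis using P_row_sum[OF x(1), of "\<lambda>z. e ^ level z"] by linarith
qed

lemma K_zero_two_weighted_lower:
  assumes C: "0 \<le> C"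
    and decay: "\<And>y. y \<in> H \<Longrightarrow> y \<noteq> (N, 1) \<Longrightarrow> y \<noteq> (0, 2) \<Longrightarrow> K t x y \<le> C * exp (- r * t)"
    and t: "0 \<le> t" and x: "x \<in> H" "x \<noteq> (N, 1)" and e: "e = min \<beta> \<mu> / L"
  shows "exp (- (2 * \<mu>) * t) * e ^ (2 * N + 1)
    \<le> e\<^sup>2 * K t x (0, 2) + real (card H) * C * exp (- r * t)"
proof -
  have e_bounds: "0 < e" "e \<le> 1" unfolding e using \<beta>_pos \<mu>_pos L_pos three_\<mu>_le_L by auto
  have "exp (- (2 * \<mu>) * t) * e ^ (2 * N + 1) \<le> exp (- (2 * \<mu>) * t) * e ^ level x"
    using level_bounds[OF x(1)] e_bounds by (intro mult_left_mono power_decreasing) auto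
  also have "\<dots> \<le> (\<Sum>z\<in>H. K t x z * e ^ level z)"
  proof (rule K_drift_lower[of "H - {(N, 1)}"])
    show "2 * \<mu> \<le> L" using out_lt_L[OF zero_two_in_H] out_zero_two by simp
    show "(1 - 2 * \<mu> / L) * e ^ level x' \<le> (\<Sum>z\<in>H. P x' z * e ^ level z)"
      if "x' \<in> H - {(N, 1)}" for x'
      using level_weight_drift_lower[OF _ _ e] that by simp
  qed (use P_to_N1 t x in auto)
  also have "\<dots> = K t x (0, 2) * e\<^sup>2 + (\<Sum>z\<in>H - {(0, 2)}. K t x z * e ^ level z)"
    using sum.remove[OF finite_H zero_two_in_H, of "\<lambda>z. K t x z * e ^ level z"]
    by (simp add: level_def power2_eq_square)
  also have "(\<Sum>z\<in>H - {(0, 2)}. K t x z * e ^ level z) \<le> (\<Sum>z\<in>H - {(0, 2)}. C * exp (- r * t))"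
  proof (rule sum_mono)
    fix z assume z: "z \<in> H - {(0, 2)}"
    have "K t x z * e ^ level z \<le> K t x z"
      using K_nonneg[OF t x(1)] e_bounds by (simp add: mult_left_le power_le_one)
    also have "K t x z \<le> C * exp (- r * t)"
      using z decay K_to_N1[OF x] C by (cases "z = (N, 1)") auto
    finally show "K t x z * e ^ level z \<le> C * exp (- r * t)" .
  qed
  also have "\<dots> \<le> real (card H) * C * exp (- r * t)"
    using C card_Diff1_le[of H "(0, 2)"] by (simp add: mult.assoc mult_right_mono)
  finally show ?thesis by (simp add: mult.commute)
qed

text \<open>The weighted mass decays no faster than exp (- 2 \<mu> t), and everything except the
  mass at (0, 2) decays strictly faster.\<close>
lemma K_zero_two_lower:
  obtains c where "0 < c"
    and "\<forall>\<^sub>F t in at_top. \<forall>x\<in>H. x \<noteq> (N, 1) \<longrightarrow> c * exp (- (2 * \<mu>) * t) \<le> K t x (0, 2)"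
proof -
  obtain r C where r: "2 * \<mu> < r" and C: "0 \<le> C"
    and decay: "\<And>t x y. 0 \<le> t \<Longrightarrow> x \<in> H \<Longrightarrow> x \<noteq> (N, 1) \<Longrightarrow> y \<in> H \<Longrightarrow> y \<noteq> (N, 1)
      \<Longrightarrow> y \<noteq> (0, 2) \<Longrightarrow> K t x y \<le> C * exp (- r * t)"
    using K_decay_off_zero_two by blast
  define e where "e = min \<beta> \<mu> / L"
  have e: "0 < e" unfolding e_def using \<beta>_pos \<mu>_pos L_pos by simp
  define B where "B = real (card H) * C"
  have "((\<lambda>t. B * exp (- (r - 2 * \<mu>) * t)) \<longlongrightarrow> 0) at_top"
    using r by (intro tendsto_mult_exp_neg_0) simp
  moreover have "0 < e ^ (2 * N + 1) / 2" using e by simp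
  ultimately have "\<forall>\<^sub>F t in at_top. B * exp (- (r - 2 * \<mu>) * t) < e ^ (2 * N + 1) / 2"
    by (rule order_tendstoD(2))
  then have "\<forall>\<^sub>F t in at_top. \<forall>x\<in>H. x \<noteq> (N, 1) \<longrightarrow>
      e ^ (2 * N + 1) / (2 * e\<^sup>2) * exp (- (2 * \<mu>) * t) \<le> K t x (0, 2)"
    using eventually_ge_at_top[of 0]
  proof eventually_elim
    case (elim t)
    have split: "exp (- r * t) = exp (- (r - 2 * \<mu>) * t) * exp (- (2 * \<mu>) * t)"
      by (simp add: exp_add[symmetric] algebra_simps)
    show ?case
    proof (intro ballI impI)
      fix x assume x: "x \<in> H" "x \<noteq> (N, 1)"
      have "exp (- (2 * \<mu>) * t) * e ^ (2 * N + 1)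
          \<le> e\<^sup>2 * K t x (0, 2) + B * exp (- (r - 2 * \<mu>) * t) * exp (- (2 * \<mu>) * t)"
        using K_zero_two_weighted_lower[OF C decay[OF elim(2) x] elim(2) x e_def]
        unfolding split B_def by (simp add: mult.assoc)
      moreover have "B * exp (- (r - 2 * \<mu>) * t) * exp (- (2 * \<mu>) * t)
          \<le> exp (- (2 * \<mu>) * t) * e ^ (2 * N + 1) / 2"
        using mult_right_mono[OF less_imp_le[OF elim(1)], of "exp (- (2 * \<mu>) * t)"]
        by (simp add: mult.commute)
      ultimately have "exp (- (2 * \<mu>) * t) * e ^ (2 * N + 1) / 2 \<le> e\<^sup>2 * K t x (0, 2)"
        by linarith
      then have "exp (- (2 * \<mu>) * t) * e ^ (2 * N + 1) / 2 / e\<^sup>2 \<le> K t x (0, 2)"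
        using e by (simp add: pos_divide_le_eq mult.commute)
      then show "e ^ (2 * N + 1) / (2 * e\<^sup>2) * exp (- (2 * \<mu>) * t) \<le> K t x (0, 2)"
        by (simp add: field_simps)
    qed
  qed
  then show thesis by (rule that[rotated]) (use e in simp)
qed

lemma cond_prob_singleton:
  "cond_prob N \<beta> \<mu> v t {y} = (\<Sum>x\<in>H. v x * K t x y) / (\<Sum>z\<in>H. \<Sum>x\<in>H. v x * K t x z)"
  unfolding cond_prob_def surv_prob_eq by simp

lemma prob_avoiding_N1_le:
  assumes "prob_on N \<rho>" and "\<rho> (N, 1) = 0" and "\<And>x. x \<in> H \<Longrightarrow> x \<noteq> (N, 1) \<Longrightarrow> f x \<le> B"
  shows "(\<Sum>x\<in>H. \<rho> x * f x) \<le> B"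
proof -
  have "(\<Sum>x\<in>H. \<rho> x * f x) \<le> (\<Sum>x\<in>H. \<rho> x * B)"
    using assms unfolding prob_on_def by (intro sum_mono) (metis mult_left_mono mult_zero_left order_refl)
  also have "\<dots> = B" using assms(1) unfolding prob_on_def by (simp add: sum_distrib_right[symmetric])
  finally show ?thesis .
qed

lemma prob_avoiding_N1_ge:
  assumes "prob_on N \<rho>" and "\<rho> (N, 1) = 0" and "\<And>x. x \<in> H \<Longrightarrow> x \<noteq> (N, 1) \<Longrightarrow> B \<le> f x"
  shows "B \<le> (\<Sum>x\<in>H. \<rho> x * f x)"
  using prob_avoiding_N1_le[OF assms(1,2), of "\<lambda>x. - f x" "- B"] assms(3) by (simp add: sum_negf)

lemma cond_prob_deviation_zero_two:
  assumes \<rho>: "prob_on N \<rho>" and \<rho>_N1: "\<rho> (N, 1) = 0" and t: "0 \<le> t" and y: "y \<in> H"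
    and pos: "0 < surv_prob N \<beta> \<mu> \<rho> t {(0, 2)}"
  shows "\<bar>cond_prob N \<beta> \<mu> \<rho> t {y} - dirac_at (0, 2) y\<bar>
    \<le> surv_prob N \<beta> \<mu> \<rho> t (H - {(N, 1), (0, 2)}) / surv_prob N \<beta> \<mu> \<rho> t {(0, 2)}"
proof -
  define m where "m z = surv_prob N \<beta> \<mu> \<rho> t {z}" for z
  define U where "U = H - {(N, 1), (0, 2)}"
  have surv: "surv_prob N \<beta> \<mu> \<rho> t A = (\<Sum>z\<in>A. m z)" for A
    unfolding m_def surv_prob_eq by simp
  have \<rho>_nonneg: "0 \<le> \<rho> x" for x using \<rho> unfolding prob_on_def by (cases x) simp
  have m_nonneg: "0 \<le> m z" for z
    unfolding m_def surv_prob_def by (intro sum_nonneg mult_nonneg_nonneg \<rho>_nonneg K_nonneg[OF t]) auto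
  have m_N1: "m (N, 1) = 0"
    unfolding m_def surv_prob_def
  proof (intro sum.neutral ballI)
    fix x assume "x \<in> H"
    then show "\<rho> x * (\<Sum>y\<in>{(N, 1)}. K t x y) = 0"
      using \<rho>_N1 K_to_N1[of x] by (cases "x = (N, 1)") auto
  qed
  define R where "R = (\<Sum>z\<in>U. m z)"
  have R: "0 \<le> R" unfolding R_def using m_nonneg by (intro sum_nonneg) auto
  have total: "surv_prob N \<beta> \<mu> \<rho> t H = m (0, 2) + R"
  proof -
    have H: "H = insert (0, 2) (insert (N, 1) U)" using zero_two_in_H N1_in_H unfolding U_def by auto
    have "(0, 2) \<notin> insert (N, 1) U" "(N, 1) \<notin> U" "finite U"
      using N1_neq_zero_two finite_H unfolding U_def by auto
    then show ?thesis unfolding surv R_def using m_N1 by (subst H) simp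
  qed
  have cond: "cond_prob N \<beta> \<mu> \<rho> t {y} = m y / (m (0, 2) + R)"
    unfolding cond_prob_def total m_def ..
  have pos': "0 < m (0, 2)" using pos unfolding m_def .
  have "\<bar>cond_prob N \<beta> \<mu> \<rho> t {y} - dirac_at (0, 2) y\<bar> \<le> R / (m (0, 2) + R)"
  proof -
    consider "y = (0, 2)" | "y = (N, 1)" | "y \<in> U" using y unfolding U_def by blast
    then show ?thesis
    proof cases
      case 1
      then show ?thesis using pos' R unfolding cond dirac_at_def by (simp add: field_simps)
    next
      case 2
      then show ?thesis using pos' R m_N1 N1_neq_zero_two unfolding cond dirac_at_def by simp
    next
      case 3
      have "m y \<le> R" unfolding R_def
        by (rule member_le_sum) (use 3 m_nonneg finite_H in \<open>auto simp: U_def\<close>)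
      then show ?thesis
        using 3 pos' R m_nonneg[of y] unfolding cond dirac_at_def U_def
        by (auto simp: divide_right_mono)
    qed
  qed
  also have "\<dots> \<le> R / m (0, 2)"
    using pos' R by (intro divide_left_mono) auto
  finally have "\<bar>cond_prob N \<beta> \<mu> \<rho> t {y} - dirac_at (0, 2) y\<bar> \<le> R / m (0, 2)" .
  moreover have "surv_prob N \<beta> \<mu> \<rho> t (H - {(N, 1), (0, 2)}) = R"
    unfolding R_def U_def surv ..
  ultimately show ?thesis by (simp add: m_def)
qed

lemma cond_prob_tendsto_zero_two:
  assumes \<rho>: "prob_on N \<rho>" and \<rho>_N1: "\<rho> (N, 1) = 0" and y: "y \<in> H"
  shows "((\<lambda>t. cond_prob N \<beta> \<mu> \<rho> t {y}) \<longlongrightarrow> dirac_at (0, 2) y) at_top"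
proof -
  obtain r C where r: "2 * \<mu> < r" and C: "0 \<le> C"
    and decay: "\<And>t x y. 0 \<le> t \<Longrightarrow> x \<in> H \<Longrightarrow> x \<noteq> (N, 1) \<Longrightarrow> y \<in> H \<Longrightarrow> y \<noteq> (N, 1)
      \<Longrightarrow> y \<noteq> (0, 2) \<Longrightarrow> K t x y \<le> C * exp (- r * t)"
    using K_decay_off_zero_two by blast
  obtain c where c: "0 < c"
    and lower: "\<forall>\<^sub>F t in at_top. \<forall>x\<in>H. x \<noteq> (N, 1) \<longrightarrow> c * exp (- (2 * \<mu>) * t) \<le> K t x (0, 2)"
    using K_zero_two_lower by blast
  define U where "U = H - {(N, 1), (0, 2)}"
  have "\<forall>\<^sub>F t in at_top. \<bar>cond_prob N \<beta> \<mu> \<rho> t {y} - dirac_at (0, 2) y\<bar>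
      \<le> real (card H) * C / c * exp (- (r - 2 * \<mu>) * t)"
    using lower eventually_ge_at_top[of 0]
  proof eventually_elim
    case (elim t)
    have mass_U: "surv_prob N \<beta> \<mu> \<rho> t U \<le> real (card H) * (C * exp (- r * t))"
    proof -
      have "surv_prob N \<beta> \<mu> \<rho> t U \<le> (\<Sum>z\<in>U. C * exp (- r * t))"
        unfolding surv_prob_eq using decay[OF elim(2)]
        by (intro sum_mono prob_avoiding_N1_le[OF \<rho> \<rho>_N1]) (auto simp: U_def)
      also have "\<dots> \<le> real (card H) * (C * exp (- r * t))"
        using C finite_H by (simp add: mult_right_mono card_mono U_def)
      finally show ?thesis .
    qed
    have "c * exp (- (2 * \<mu>) * t) \<le> (\<Sum>x\<in>H. \<rho> x * K t x (0, 2))"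
      by (rule prob_avoiding_N1_ge[OF \<rho> \<rho>_N1]) (use elim(1) in auto)
    then have mass_zero_two: "c * exp (- (2 * \<mu>) * t) \<le> surv_prob N \<beta> \<mu> \<rho> t {(0, 2)}"
      by (simp add: surv_prob_eq)
    have pos: "0 < c * exp (- (2 * \<mu>) * t)" using c by simp
    have "\<bar>cond_prob N \<beta> \<mu> \<rho> t {y} - dirac_at (0, 2) y\<bar>
        \<le> surv_prob N \<beta> \<mu> \<rho> t U / surv_prob N \<beta> \<mu> \<rho> t {(0, 2)}"
      unfolding U_def
      by (rule cond_prob_deviation_zero_two[OF \<rho> \<rho>_N1 elim(2) y less_le_trans[OF pos mass_zero_two]])
    also have "\<dots> \<le> real (card H) * (C * exp (- r * t)) / (c * exp (- (2 * \<mu>) * t))"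
      using mass_U mass_zero_two pos C
      by (intro frac_le) (auto simp: surv_prob_def U_def intro!: sum_nonneg mult_nonneg_nonneg)
    also have "\<dots> = real (card H) * C / c * exp (- (r - 2 * \<mu>) * t)"
    proof -
      have "exp (- r * t) = exp (- (r - 2 * \<mu>) * t) * exp (- (2 * \<mu>) * t)"
        by (simp add: exp_add[symmetric] algebra_simps)
      then show ?thesis using c by simp
    qed
    finally show ?case .
  qed
  then show ?thesis by (rule tendsto_of_exp_decaying_error[rotated]) (use r in linarith)
qed

lemma K_from_N1_tendsto:
  assumes subcritical: "\<beta> * real N < \<mu>" and z: "z \<in> H"
  shows "((\<lambda>t. exp (out (N, 1) * t) * K t (N, 1) z) \<longlongrightarrow> qsd z / qsd (N, 1)) at_top"
proof -
  obtain r C where r: "out (N, 1) < r" and C: "0 \<le> C"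
    and decay: "\<And>t x z. 0 \<le> t \<Longrightarrow> x \<in> H \<Longrightarrow> x \<noteq> (N, 1) \<Longrightarrow> K t x z \<le> C * exp (- r * t)"
    using K_decay_off_N1[OF subcritical] by blast
  define q where "q = qsd (N, 1)"
  have q: "0 < q" unfolding q_def by (rule qsd_pos[OF subcritical N1_in_H])
  have qsd_nonneg: "0 \<le> qsd x" for x
    using qsd_prob[OF subcritical] unfolding prob_on_def by (cases x) simp
  have "\<forall>\<^sub>F t in at_top. \<bar>exp (out (N, 1) * t) * K t (N, 1) z - qsd z / qsd (N, 1)\<bar>
      \<le> C / q * exp (- (r - out (N, 1)) * t)"
    using eventually_ge_at_top[of 0]
  proof eventually_elim
    case (elim t)
    define R where "R = (\<Sum>x\<in>H - {(N, 1)}. qsd x * K t x z)"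
    have "exp (- out (N, 1) * t) * qsd z = (\<Sum>x\<in>H. qsd x * K t x z)"
      by (rule K_left_eigen[OF qsd_left_eigen[OF subcritical] z elim, symmetric])
    also have "\<dots> = q * K t (N, 1) z + R"
      unfolding R_def q_def by (rule sum.remove[OF finite_H N1_in_H])
    finally have "exp (out (N, 1) * t) * K t (N, 1) z - qsd z / q = - exp (out (N, 1) * t) * R / q"
      using q by (simp add: field_simps exp_minus)
    moreover have "0 \<le> R" "R \<le> C * exp (- r * t)"
    proof -
      show "0 \<le> R" unfolding R_def
        using qsd_nonneg K_nonneg[OF elim] by (intro sum_nonneg mult_nonneg_nonneg) auto
      have "R \<le> (\<Sum>x\<in>H - {(N, 1)}. qsd x) * (C * exp (- r * t))"
        unfolding R_def sum_distrib_right using qsd_nonneg decay[OF elim]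
        by (intro sum_mono mult_left_mono) auto
      also have "\<dots> \<le> (\<Sum>x\<in>H. qsd x) * (C * exp (- r * t))"
        using C finite_H qsd_nonneg by (intro mult_right_mono sum_mono2) auto
      also have "\<dots> = C * exp (- r * t)"
        using qsd_prob[OF subcritical] unfolding prob_on_def by simp
      finally show "R \<le> C * exp (- r * t)" .
    qed
    ultimately have "\<bar>exp (out (N, 1) * t) * K t (N, 1) z - qsd z / q\<bar>
        \<le> exp (out (N, 1) * t) * (C * exp (- r * t)) / q"
      using q by (simp add: abs_mult divide_right_mono mult_left_mono)
    also have "\<dots> = C / q * exp (- (r - out (N, 1)) * t)"
      by (simp add: exp_add[symmetric] algebra_simps)
    finally show ?case unfolding q_def .
  qed
  then show ?thesis by (rule tendsto_of_exp_decaying_error[rotated]) (use r in simp)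
qed

lemma cond_prob_tendsto_qsd:
  assumes subcritical: "\<beta> * real N < \<mu>" and y: "y \<in> H"
  shows "((\<lambda>t. cond_prob N \<beta> \<mu> (dirac_at (N, 1)) t {y}) \<longlongrightarrow> qsd y) at_top"
proof -
  define F where "F t z = exp (out (N, 1) * t) * K t (N, 1) z" for t z
  define q where "q = qsd (N, 1)"
  have q: "0 < q" unfolding q_def by (rule qsd_pos[OF subcritical N1_in_H])
  have "((\<lambda>t. \<Sum>z\<in>H. F t z) \<longlongrightarrow> (\<Sum>z\<in>H. qsd z / q)) at_top"
    unfolding F_def q_def by (intro tendsto_sum K_from_N1_tendsto[OF subcritical])
  moreover have "(\<Sum>z\<in>H. qsd z / q) = 1 / q"
    using qsd_prob[OF subcritical] unfolding prob_on_def by (simp add: sum_divide_distrib[symmetric])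
  ultimately have "((\<lambda>t. F t y / (\<Sum>z\<in>H. F t z)) \<longlongrightarrow> (qsd y / q) / (1 / q)) at_top"
    using q K_from_N1_tendsto[OF subcritical y] unfolding F_def q_def
    by (intro tendsto_divide) simp_all
  moreover have "cond_prob N \<beta> \<mu> (dirac_at (N, 1)) t {y} = F t y / (\<Sum>z\<in>H. F t z)" for t
  proof -
    have "(\<Sum>x\<in>H. dirac_at (N, 1) x * K t x z) = K t (N, 1) z" for z
      unfolding dirac_at_def using finite_H N1_in_H by (simp add: if_distrib[of "\<lambda>u. u * _"] cong: if_cong)
    then show ?thesis
      unfolding cond_prob_singleton F_def by (simp add: sum_distrib_left[symmetric])
  qed
  ultimately show ?thesis using q by simp
qed

end

theorem mainTheorem7:
  fixes N :: nat and \<beta> \<mu> :: real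
  assumes "1 \<le> N" and "0 < \<beta>" and "0 < \<mu>"
  shows "((\<exists>\<nu>. is_QSD N \<beta> \<mu> \<nu> \<and> \<nu> (N, 1) > 0) \<longleftrightarrow> \<mu> > \<beta> * real N)
    \<and> (\<mu> > \<beta> * real N \<longrightarrow>
         (\<exists>\<nu>. is_QSD N \<beta> \<mu> \<nu> \<and> \<nu> (N, 1) > 0
              \<and> (\<forall>\<nu>'. is_QSD N \<beta> \<mu> \<nu>' \<and> \<nu>' (N, 1) > 0 \<longrightarrow> \<nu>' = \<nu>)
              \<and> (\<forall>x\<in>SIR_hat N. \<nu> x > 0)
              \<and> (\<forall>y\<in>SIR_hat N.
                   ((\<lambda>t. cond_prob N \<beta> \<mu> (dirac_at (N, 1)) t {y}) \<longlongrightarrow> \<nu> y) at_top)))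
    \<and> (\<forall>\<rho>. prob_on N \<rho> \<and> \<rho> (N, 1) = 0 \<longrightarrow>
         (\<forall>y\<in>SIR_hat N.
            ((\<lambda>t. cond_prob N \<beta> \<mu> \<rho> t {y}) \<longlongrightarrow> dirac_at (0, 2) y) at_top))"
proof -
  interpret sir N \<beta> \<mu> using assms by unfold_locales
  have qsd_facts: "is_QSD N \<beta> \<mu> qsd \<and> qsd (N, 1) > 0
      \<and> (\<forall>\<nu>'. is_QSD N \<beta> \<mu> \<nu>' \<and> \<nu>' (N, 1) > 0 \<longrightarrow> \<nu>' = qsd)
      \<and> (\<forall>x\<in>SIR_hat N. qsd x > 0)
      \<and> (\<forall>y\<in>SIR_hat N. ((\<lambda>t. cond_prob N \<beta> \<mu> (dirac_at (N, 1)) t {y}) \<longlongrightarrow> qsd y) at_top)"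
    if "\<mu> > \<beta> * real N"
    using that qsd_is_QSD qsd_pos N1_in_H QSD_charging_N1_unique cond_prob_tendsto_qsd by blast
  show ?thesis
    using qsd_facts QSD_charging_N1_imp_subcritical cond_prob_tendsto_zero_two by blast
qed

end
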